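(* Let $g\geq 3$, $d=2g+1$ and $h=\lfloor\log_2(g+1)+1\rfloor$. Let $r\geq 1$ and let $\mathbf k={}^t(k_1,\dots,k_d)\in\mathbf K_r$. Then $s(\mathbf k)\geq\lceil s(r)/h\rceil$. If moreover $s(\mathbf k)=s(r)/h$, then: 1) every entry $\dot k_{\ell,v}$ ($1\le\ell\le d$, $v\ge0$) of the $2$-adic box of $\mathbf k$ is $0$ or $1$; 2) exactly $s(r)/h$ of the entries $\dot k_{1,v}$ ($v\geq 0$) are equal to $1$ and the others are $0$; 3) for every $v\geq 0$, $s\big(\sum_{\ell=1}^d\dot k_{\ell,v}\big)$ equals $0$ or $h$.
   Context: For a nonnegative integer $m$, $s(m)$ is the sum of the binary digits of $m$. For $r\ge0$, $\mathbf K_r=\{{}^t(k_1,\dots,k_d)\in\mathbb Z^d: k_1\geq k_2\geq\cdots\geq k_d\geq 0,\ \sum_{\ell=1}^d k_\ell=r\}$. For $\mathbf k\in\mathbf K_r$ put $s(\mathbf k)=s(k_1-k_2)+s(k_2-k_3)+\cdots+s(k_{d-1}-k_d)+s(k_d)$. The dot representation (2-adic box) of $\mathbf k$ is the array of integers $\dot k_{\ell,v}$ ($1\le \ell\le d$, $v\ge 0$) defined by: $\dot k_{d,v}$ is the $2^v$-coefficient of the binary expansion of $k_d$; and for $1<\ell\le d$, $\dot k_{\ell-1,v}=\dot k_{\ell,v}+(\text{the }2^v\text{-coefficient of the binary expansion of }k_{\ell-1}-k_\ell)$. Then $k_\ell=\sum_v\dot k_{\ell,v}2^v$ and $s(\mathbf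 k)=\sum_v \dot k_{1,v}$. *)

theory Defs
  imports Complex_Main
begin

fun bin_digit_sum :: "nat \<Rightarrow> nat" where
  "bin_digit_sum n = (if n = 0 then 0 else n mod 2 + bin_digit_sum (n div 2))"

definition bin_digit :: "nat \<Rightarrow> nat \<Rightarrow> nat" where
  "bin_digit m v = (m div 2 ^ v) mod 2"

text \<open>Vectors k = (k_1,...,k_d) are functions nat => nat, only indices 1..d matter.
  K_r membership:\<close>
definition in_K :: "nat \<Rightarrow> nat \<Rightarrow> (nat \<Rightarrow> nat) \<Rightarrow> bool" where
  "in_K d r k \<longleftrightarrow> (\<forall>l\<in>{1..<d}. k (l + 1) \<le> k l) \<and> (\<Sum>l=1..d. k l) = r"

definition kdiff :: "nat \<Rightarrow> (nat \<Rightarrow> nat) \<Rightarrow> nat \<Rightarrow> nat" where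
  "kdiff d k l = (if l = d then k d else k l - k (l + 1))"

definition s_vec :: "nat \<Rightarrow> (nat \<Rightarrow> nat) \<Rightarrow> nat" where
  "s_vec d k = (\<Sum>l=1..d. bin_digit_sum (kdiff d k l))"

text \<open>Dot representation: dot_{d,v} = digit_v(k_d), dot_{l-1,v} = dot_{l,v} + digit_v(k_{l-1}-k_l);
  unfolding the recursion gives the sum below.\<close>
definition dot :: "nat \<Rightarrow> (nat \<Rightarrow> nat) \<Rightarrow> nat \<Rightarrow> nat \<Rightarrow> nat" where
  "dot d k l v = (\<Sum>j=l..d. bin_digit (kdiff d k j) v)"

end

theory Submission
  imports Defs
begin

text \<open>Summation by parts gives \<open>r = \<Sum>\<^sub>j j (k\<^sub>j - k\<^sub>j\<^sub>+\<^sub>1)\<close>; expanding each difference in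
  base 2 yields \<open>r = \<Sum>\<^sub>v c\<^sub>v 2\<^sup>v\<close>, where \<open>c\<^sub>v = \<Sum>\<^sub>l dot\<^sub>l\<^sub>,\<^sub>v\<close> is the sum of the rows j at which
  column v of the 2-adic box steps up, while \<open>s(k)\<close> counts all these steps. Every row index is
  at most \<open>d \<le> 2\<^sup>h\<^sup>+\<^sup>1 - 3\<close>, so it has at most h binary ones and the sum of two indices at most
  h + 1. Hence \<open>s(c\<^sub>v) \<le> h \<cdot> dot\<^sub>1\<^sub>,\<^sub>v\<close>, strictly if column v has two or more steps, and
  subadditivity of s gives \<open>s(r) \<le> \<Sum>\<^sub>v s(c\<^sub>v) \<le> h \<cdot> s(k)\<close>. In the equality case every
  column has at most one step and \<open>s(c\<^sub>v) = h \<cdot> dot\<^sub>1\<^sub>,\<^sub>v\<close>.\<close>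

declare bin_digit_sum.simps [simp del]

lemma bin_digit_sum_0 [simp]: "bin_digit_sum 0 = 0"
  by (simp add: bin_digit_sum.simps)

lemma bin_digit_sum_rec: "bin_digit_sum n = n mod 2 + bin_digit_sum (n div 2)"
  by (cases "n = 0") (simp_all add: bin_digit_sum.simps [of n])

lemma bin_digit_sum_mult_2 [simp]: "bin_digit_sum (2 * n) = bin_digit_sum n"
  using bin_digit_sum_rec [of "2 * n"] by simp

lemma bin_digit_sum_power2_mult [simp]: "bin_digit_sum (2 ^ v * n) = bin_digit_sum n"
  by (induction v) (simp_all add: mult.assoc)

lemma bin_digit_sum_Suc_le: "bin_digit_sum (Suc n) \<le> Suc (bin_digit_sum n)"
proof (induction n rule: less_induct)
  case (less n)
  show ?case
  proof (cases "even n")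
    case True
    then show ?thesis
      using bin_digit_sum_rec [of "Suc n"] bin_digit_sum_rec [of n] by simp
  next
    case False
    then have "Suc n = 2 * Suc (n div 2)" and "n div 2 < n"
      by presburger+
    then have "bin_digit_sum (Suc n) = bin_digit_sum (Suc (n div 2))"
      by (metis bin_digit_sum_mult_2)
    then show ?thesis
      using less.IH [of "n div 2"] \<open>n div 2 < n\<close> bin_digit_sum_rec [of n] False
      by (simp add: odd_iff_mod_2_eq_one)
  qed
qed

lemma bin_digit_sum_add_le: "bin_digit_sum (a + b) \<le> bin_digit_sum a + bin_digit_sum b"
proof (induction a arbitrary: b rule: less_induct)
  case (less a)
  show ?case
  proof (cases "a = 0")
    case False
    then have IH: "bin_digit_sum (a div 2 + c) \<le> bin_digit_sum (a div 2) + bin_digit_sum c" for c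
      using less.IH by simp
    show ?thesis
    proof (cases "odd a \<and> odd b")
      case True
      then have "a + b = 2 * (a div 2 + Suc (b div 2))"
        by presburger
      then have "bin_digit_sum (a + b) = bin_digit_sum (a div 2 + Suc (b div 2))"
        by (metis bin_digit_sum_mult_2)
      then show ?thesis
        using IH [of "Suc (b div 2)"] bin_digit_sum_Suc_le [of "b div 2"] True
          bin_digit_sum_rec [of a] bin_digit_sum_rec [of b] by (simp add: odd_iff_mod_2_eq_one)
    next
      case False
      then have "(a + b) mod 2 = a mod 2 + b mod 2" and "(a + b) div 2 = a div 2 + b div 2"
        by presburger+
      then show ?thesis
        using IH [of "b div 2"] bin_digit_sum_rec [of "a + b"]
          bin_digit_sum_rec [of a] bin_digit_sum_rec [of b] by simp
    qed
  qed simp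
qed

lemma bin_digit_sum_sum_le:
  "bin_digit_sum (\<Sum>i\<in>A. f i) \<le> (\<Sum>i\<in>A. bin_digit_sum (f i))"
proof (induction A rule: infinite_finite_induct)
  case (insert x A)
  then show ?case
    using bin_digit_sum_add_le [of "f x" "sum f A"] by simp
qed simp_all

lemma bin_digit_sum_le_of_less_power: "n < 2 ^ t \<Longrightarrow> bin_digit_sum n \<le> t"
proof (induction t arbitrary: n)
  case (Suc t)
  then have "bin_digit_sum (n div 2) \<le> t"
    by (intro Suc.IH) simp
  then show ?case
    using bin_digit_sum_rec [of n] by simp
qed simp

lemma bin_digit_sum_less_of_Suc_less_power:
  "Suc n < 2 ^ t \<Longrightarrow> bin_digit_sum n < t"
proof (induction t arbitrary: n)
  case (Suc t)
  show ?case
  proof (cases "even n")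
    case True
    then have "n div 2 < 2 ^ t"
      using Suc.prems by simp
    then have "bin_digit_sum (n div 2) \<le> t"
      by (rule bin_digit_sum_le_of_less_power)
    then show ?thesis
      using bin_digit_sum_rec [of n] True by simp
  next
    case False
    then have "Suc (n div 2) < 2 ^ t"
      using Suc.prems by simp presburger
    then show ?thesis
      using Suc.IH [of "n div 2"] bin_digit_sum_rec [of n] False by simp
  qed
qed simp

lemma bin_digit_le_1: "bin_digit n v \<le> 1"
  by (simp add: bin_digit_def)

lemma bin_digit_0: "bin_digit n 0 = n mod 2"
  by (simp add: bin_digit_def)

lemma bin_digit_Suc: "bin_digit n (Suc v) = bin_digit (n div 2) v"
  by (simp add: bin_digit_def div_mult2_eq)

lemma bin_digit_eq_0_of_less_power: "n < 2 ^ v \<Longrightarrow> bin_digit n v = 0"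
  by (simp add: bin_digit_def)

lemma bin_digit_sum_eq_sum_bin_digit:
  "n < 2 ^ N \<Longrightarrow> bin_digit_sum n = (\<Sum>v<N. bin_digit n v)"
proof (induction N arbitrary: n)
  case (Suc N)
  then have "n div 2 < 2 ^ N"
    by simp
  then show ?case
    using Suc.IH [of "n div 2"] bin_digit_sum_rec [of n]
    by (simp add: sum.lessThan_Suc_shift bin_digit_Suc bin_digit_0 del: sum.lessThan_Suc)
qed simp

lemma sum_bin_digit_power2:
  "n < 2 ^ N \<Longrightarrow> (\<Sum>v<N. bin_digit n v * 2 ^ v) = n"
proof (induction N arbitrary: n)
  case (Suc N)
  then have "n div 2 < 2 ^ N"
    by simp
  then have "(\<Sum>v<N. bin_digit n (Suc v) * 2 ^ Suc v) = 2 * (n div 2)"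
    using Suc.IH [of "n div 2"] by (simp add: bin_digit_Suc mult_ac flip: sum_distrib_left)
  then show ?case
    by (simp add: sum.lessThan_Suc_shift bin_digit_0 del: sum.lessThan_Suc)
qed simp

lemma sum_mult_bin_digit:
  assumes "finite A"
  shows "(\<Sum>j\<in>A. g j * bin_digit (f j) v) = (\<Sum>j\<in>{j\<in>A. bin_digit (f j) v = 1}. g j)"
proof -
  have "g j * bin_digit (f j) v = (if bin_digit (f j) v = 1 then g j else 0)" for j
    using bin_digit_le_1 [of "f j" v] by (cases "bin_digit (f j) v") auto
  then show ?thesis
    using assms by (simp add: sum.inter_filter)
qed

lemma bin_digit_sum_Sum_le:
  assumes "J \<subseteq> {1..d}" and "Suc d < 2 ^ Suc h"
  shows "bin_digit_sum (\<Sum>J) \<le> h * card J"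
proof -
  have "bin_digit_sum j \<le> h" if "j \<in> J" for j
    using bin_digit_sum_less_of_Suc_less_power [of j "Suc h"] that assms by fastforce
  then have "(\<Sum>j\<in>J. bin_digit_sum j) \<le> h * card J"
    using sum_bounded_above [of J bin_digit_sum h] by (simp add: mult.commute)
  then show ?thesis
    using bin_digit_sum_sum_le [of "\<lambda>j. j" J] by simp
qed

text \<open>Two distinct elements of J sum to at most 2d, whose binary digit sum is at most h + 1
  rather than 2h.\<close>
lemma bin_digit_sum_Sum_less:
  assumes J: "J \<subseteq> {1..d}" and d: "Suc d < 2 ^ Suc h"
    and "2 \<le> h" and "2 \<le> card J"
  shows "bin_digit_sum (\<Sum>J) < h * card J"
proof -
  obtain a b R where JR: "J = insert a (insert b R)" "a \<notin> insert b R" "b \<notin> R" "finite R"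
    using \<open>2 \<le> card J\<close> by (auto simp: numeral_2_eq_2 card_le_Suc_iff)
  then have sum_J: "\<Sum>J = (a + b) + \<Sum>R" and card_J: "card J = card R + 2"
    by (simp_all add: add.assoc)
  have "Suc (a + b) < 2 ^ Suc (Suc h)"
    using J JR d by auto
  then have "bin_digit_sum (a + b) \<le> Suc h"
    using bin_digit_sum_less_of_Suc_less_power by fastforce
  moreover have "bin_digit_sum (\<Sum>R) \<le> h * card R"
    using J JR d by (intro bin_digit_sum_Sum_le) auto
  ultimately have "bin_digit_sum (\<Sum>J) \<le> Suc h + h * card R"
    using bin_digit_sum_add_le [of "a + b" "\<Sum>R"] unfolding sum_J by linarith
  then show ?thesis
    using \<open>2 \<le> h\<close> unfolding card_J by simp
qed

lemma sum_tails_eq_weighted_sum: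
  "(\<Sum>l=1..d. \<Sum>j=l..d. f j) = (\<Sum>j=1..d. j * (f j :: nat))"
proof (induction d)
  case (Suc d)
  have "(\<Sum>l=1..Suc d. \<Sum>j=l..Suc d. f j) = (\<Sum>l=1..d. \<Sum>j=l..Suc d. f j) + f (Suc d)"
    by simp
  also have "(\<Sum>l=1..d. \<Sum>j=l..Suc d. f j) = (\<Sum>l=1..d. (\<Sum>j=l..d. f j) + f (Suc d))"
    by (rule sum.cong) auto
  also have "\<dots> = (\<Sum>j=1..d. j * f j) + d * f (Suc d)"
    using Suc.IH by (simp add: sum.distrib)
  finally show ?case
    by simp
qed simp

lemma sum_kdiff_eq:
  assumes mono: "\<forall>l\<in>{1..<d}. k (l + 1) \<le> k l" and "1 \<le> l" "l \<le> d"
  shows "(\<Sum>j=l..d. kdiff d k j) = k l"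
  using \<open>l \<le> d\<close> \<open>1 \<le> l\<close>
proof (induction l rule: inc_induct)
  case base
  then show ?case by (simp add: kdiff_def)
next
  case (step l)
  then have "k (l + 1) \<le> k l"
    using mono by simp
  then show ?case
    using step by (simp add: sum.atLeast_Suc_atMost kdiff_def)
qed

text \<open>Column v of the 2-adic box steps up by one exactly at the rows in \<open>column_steps d k v\<close>:
  \<open>dot d k l v\<close> counts its elements \<open>\<ge> l\<close>.\<close>
definition column_steps :: "nat \<Rightarrow> (nat \<Rightarrow> nat) \<Rightarrow> nat \<Rightarrow> nat set" where
  "column_steps d k v = {j\<in>{1..d}. bin_digit (kdiff d k j) v = 1}"

lemma dot_1_eq_card_column_steps: "dot d k 1 v = card (column_steps d k v)"
  using sum_mult_bin_digit [of "{1..d}" "\<lambda>_. 1" "kdiff d k" v]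
  unfolding dot_def column_steps_def by simp

lemma sum_dot_eq_Sum_column_steps: "(\<Sum>l=1..d. dot d k l v) = \<Sum>(column_steps d k v)"
  using sum_mult_bin_digit [of "{1..d}" "\<lambda>j. j" "kdiff d k" v]
  unfolding dot_def column_steps_def sum_tails_eq_weighted_sum by simp

lemma dot_le_dot_1: "1 \<le> l \<Longrightarrow> dot d k l v \<le> dot d k 1 v"
  unfolding dot_def by (intro sum_mono2) auto

lemma in_K_eq_weighted_sum_kdiff:
  assumes "in_K d r k"
  shows "r = (\<Sum>j=1..d. j * kdiff d k j)"
proof -
  have "r = (\<Sum>l=1..d. k l)"
    using assms by (simp add: in_K_def)
  also have "\<dots> = (\<Sum>l=1..d. \<Sum>j=l..d. kdiff d k j)"
    using assms by (intro sum.cong) (simp_all add: in_K_def sum_kdiff_eq)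
  finally show ?thesis
    unfolding sum_tails_eq_weighted_sum .
qed

lemma in_K_kdiff_le:
  assumes "in_K d r k" and "j \<in> {1..d}"
  shows "kdiff d k j \<le> r"
proof -
  have "kdiff d k j \<le> k j"
    by (simp add: kdiff_def)
  also have "\<dots> \<le> (\<Sum>l=1..d. k l)"
    using assms(2) by (intro member_le_sum) auto
  finally show ?thesis
    using assms(1) by (simp add: in_K_def)
qed

lemma in_K_kdiff_less_power: "in_K d r k \<Longrightarrow> j \<in> {1..d} \<Longrightarrow> kdiff d k j < 2 ^ r"
  using in_K_kdiff_le less_exp le_less_trans by blast

lemma in_K_column_steps_eq_empty: "in_K d r k \<Longrightarrow> r \<le> v \<Longrightarrow> column_steps d k v = {}"
  unfolding column_steps_def
  by (auto dest!: in_K_kdiff_less_power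
      simp: bin_digit_eq_0_of_less_power order.strict_trans2 power_increasing)

lemma in_K_s_vec_eq_sum_card:
  assumes K: "in_K d r k"
  shows "s_vec d k = (\<Sum>v<r. card (column_steps d k v))"
proof -
  have "s_vec d k = (\<Sum>j=1..d. \<Sum>v<r. bin_digit (kdiff d k j) v)"
    unfolding s_vec_def
    by (intro sum.cong refl bin_digit_sum_eq_sum_bin_digit in_K_kdiff_less_power [OF K])
  also have "\<dots> = (\<Sum>v<r. card (column_steps d k v))"
    using sum_mult_bin_digit [of "{1..d}" "\<lambda>_. 1" "kdiff d k"]
    by (subst sum.swap) (simp add: column_steps_def)
  finally show ?thesis .
qed

lemma in_K_eq_sum_column_steps:
  assumes K: "in_K d r k"
  shows "r = (\<Sum>v<r. \<Sum>(column_steps d k v) * 2 ^ v)"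
proof -
  have "r = (\<Sum>j=1..d. j * kdiff d k j)"
    using K by (rule in_K_eq_weighted_sum_kdiff)
  also have "\<dots> = (\<Sum>j=1..d. j * (\<Sum>v<r. bin_digit (kdiff d k j) v * 2 ^ v))"
    by (intro sum.cong) (simp_all add: sum_bin_digit_power2 in_K_kdiff_less_power [OF K])
  also have "\<dots> = (\<Sum>v<r. (\<Sum>j=1..d. j * bin_digit (kdiff d k j) v) * 2 ^ v)"
    by (simp add: sum_distrib_left sum_distrib_right mult.assoc) (rule sum.swap)
  also have "\<dots> = (\<Sum>v<r. \<Sum>(column_steps d k v) * 2 ^ v)"
    using sum_mult_bin_digit [of "{1..d}" "\<lambda>j. j" "kdiff d k"] by (simp add: column_steps_def)
  finally show ?thesis .
qed

lemma in_K_bin_digit_sum_le: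
  assumes "in_K d r k"
  shows "bin_digit_sum r \<le> (\<Sum>v<r. bin_digit_sum (\<Sum>(column_steps d k v)))"
proof -
  have "bin_digit_sum r = bin_digit_sum (\<Sum>v<r. \<Sum>(column_steps d k v) * 2 ^ v)"
    using in_K_eq_sum_column_steps [OF assms] by (rule arg_cong)
  also have "\<dots> \<le> (\<Sum>v<r. bin_digit_sum (\<Sum>(column_steps d k v)))"
    using bin_digit_sum_sum_le [of "\<lambda>v. \<Sum>(column_steps d k v) * 2 ^ v" "{..<r}"]
    by (simp add: mult.commute)
  finally show ?thesis .
qed

lemma column_steps_subset: "column_steps d k v \<subseteq> {1..d}"
  by (auto simp: column_steps_def)

lemma in_K_bin_digit_sum_le_mult_s_vec:
  assumes K: "in_K d r k" and d: "Suc d < 2 ^ Suc h"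
  shows "bin_digit_sum r \<le> h * s_vec d k"
proof -
  have "bin_digit_sum r \<le> (\<Sum>v<r. bin_digit_sum (\<Sum>(column_steps d k v)))"
    using K by (rule in_K_bin_digit_sum_le)
  also have "\<dots> \<le> (\<Sum>v<r. h * card (column_steps d k v))"
    using column_steps_subset d by (intro sum_mono bin_digit_sum_Sum_le)
  also have "\<dots> = h * s_vec d k"
    by (simp add: in_K_s_vec_eq_sum_card [OF K] sum_distrib_left)
  finally show ?thesis .
qed

text \<open>Equality in the previous bound forces equality column by column, and then
  \<open>bin_digit_sum_Sum_less\<close> excludes columns with two or more steps.\<close>
lemma in_K_column_steps_tight:
  assumes K: "in_K d r k" and d: "Suc d < 2 ^ Suc h" and "2 \<le> h"
    and eq: "bin_digit_sum r = h * s_vec d k"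
  shows "card (column_steps d k v) \<le> 1"
    and "bin_digit_sum (\<Sum>(column_steps d k v)) = h * card (column_steps d k v)"
proof -
  have le: "bin_digit_sum (\<Sum>(column_steps d k w)) \<le> h * card (column_steps d k w)" for w
    using column_steps_subset d by (rule bin_digit_sum_Sum_le)
  have "(\<Sum>w<r. h * card (column_steps d k w)) \<le> (\<Sum>w<r. bin_digit_sum (\<Sum>(column_steps d k w)))"
    using in_K_bin_digit_sum_le [OF K] eq by (simp add: in_K_s_vec_eq_sum_card [OF K] sum_distrib_left)
  then have sum_eq: "(\<Sum>w<r. bin_digit_sum (\<Sum>(column_steps d k w))) = (\<Sum>w<r. h * card (column_steps d k w))"
    by (rule antisym [OF sum_mono [OF le]])
  have "bin_digit_sum (\<Sum>(column_steps d k v)) = h * card (column_steps d k v)"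
  proof (cases "r \<le> v")
    case True
    then show ?thesis
      using in_K_column_steps_eq_empty [OF K] by simp
  next
    case False
    then show ?thesis
      using sum_mono_inv [OF sum_eq le, of v] by simp
  qed
  then show "bin_digit_sum (\<Sum>(column_steps d k v)) = h * card (column_steps d k v)" .
  then show "card (column_steps d k v) \<le> 1"
    using bin_digit_sum_Sum_less [OF column_steps_subset d \<open>2 \<le> h\<close>, of k v]
    by (cases "2 \<le> card (column_steps d k v)") auto
qed

lemma in_K_card_dot_1_eq_s_vec:
  assumes K: "in_K d r k" and one_step: "\<And>v. card (column_steps d k v) \<le> 1"
  shows "finite {v. dot d k 1 v = 1}" and "card {v. dot d k 1 v = 1} = s_vec d k"
proof -
  have "v < r" if "card (column_steps d k v) = 1" for v
    using that in_K_column_steps_eq_empty [OF K, of v] by (cases "r \<le> v") auto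
  then have set_eq: "{v. dot d k 1 v = 1} = {v\<in>{..<r}. card (column_steps d k v) = 1}"
    unfolding dot_1_eq_card_column_steps by auto
  then show "finite {v. dot d k 1 v = 1}"
    by simp
  have "card {v\<in>{..<r}. card (column_steps d k v) = 1}
      = (\<Sum>v<r. if card (column_steps d k v) = 1 then 1 else 0)"
    by (subst sum.inter_filter [symmetric]) simp_all
  also have "\<dots> = s_vec d k"
  proof -
    have "(if c = 1 then 1 else 0) = c" if "c \<le> 1" for c :: nat
      using that by auto
    then show ?thesis
      unfolding in_K_s_vec_eq_sum_card [OF K] using one_step by (intro sum.cong) simp_all
  qed
  finally show "card {v. dot d k 1 v = 1} = s_vec d k"
    unfolding set_eq .
qed

lemma in_K_equality_case:
  assumes K: "in_K d r k" and d: "Suc d < 2 ^ Suc h" and "2 \<le> h"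
    and eq: "bin_digit_sum r = h * s_vec d k"
  shows "1 \<le> l \<Longrightarrow> dot d k l v \<le> 1"
    and "finite {v. dot d k 1 v = 1}" and "card {v. dot d k 1 v = 1} = s_vec d k"
    and "bin_digit_sum (\<Sum>l=1..d. dot d k l v) = 0 \<or> bin_digit_sum (\<Sum>l=1..d. dot d k l v) = h"
proof -
  note tight = in_K_column_steps_tight [OF K d \<open>2 \<le> h\<close> eq]
  have "dot d k 1 v \<le> 1"
    unfolding dot_1_eq_card_column_steps by (rule tight(1))
  then show "1 \<le> l \<Longrightarrow> dot d k l v \<le> 1"
    using dot_le_dot_1 order_trans by blast
  show "finite {v. dot d k 1 v = 1}" and "card {v. dot d k 1 v = 1} = s_vec d k"
    using in_K_card_dot_1_eq_s_vec [OF K tight(1)] by simp_all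
  show "bin_digit_sum (\<Sum>l=1..d. dot d k l v) = 0 \<or> bin_digit_sum (\<Sum>l=1..d. dot d k l v) = h"
    unfolding sum_dot_eq_Sum_column_steps tight(2) using tight(1) [of v] by (auto simp: le_Suc_eq)
qed

lemma less_power_nat_floor_log:
  fixes x :: real
  assumes "1 \<le> x"
  shows "x < 2 ^ nat \<lfloor>log 2 x + 1\<rfloor>"
proof -
  have "0 \<le> log 2 x"
    using assms by simp
  have "x = 2 powr log 2 x"
    using assms by simp
  also have "\<dots> < 2 powr of_int \<lfloor>log 2 x + 1\<rfloor>"
    using floor_correct [of "log 2 x + 1"] by simp
  also have "\<dots> = 2 ^ nat \<lfloor>log 2 x + 1\<rfloor>"
    using \<open>0 \<le> log 2 x\<close> by (simp add: powr_realpow [symmetric])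
  finally show ?thesis .
qed

lemma ceiling_divide_le_of_le_mult:
  fixes a h s :: nat
  assumes "0 < h" and "a \<le> h * s"
  shows "real_of_int \<lceil>real a / real h\<rceil> \<le> real s"
proof -
  have "real a / real h \<le> real s"
    using assms by (simp add: divide_le_eq mult.commute flip: of_nat_mult)
  then have "\<lceil>real a / real h\<rceil> \<le> int s"
    by (simp add: ceiling_le_iff)
  then show ?thesis
    by linarith
qed

theorem lemma2p2:
  fixes g d h r :: nat and k :: "nat \<Rightarrow> nat"
  assumes "g \<ge> 3" and "d = 2 * g + 1"
    and "h = nat \<lfloor>log 2 (real g + 1) + 1\<rfloor>"
    and "r \<ge> 1" and "in_K d r k"
  shows "real_of_int \<lceil>real (bin_digit_sum r) / real h\<rceil> \<le> real (s_vec d k)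
     \<and> (real (s_vec d k) = real (bin_digit_sum r) / real h \<longrightarrow> (
           (\<forall>l\<in>{1..d}. \<forall>v. dot d k l v = 0 \<or> dot d k l v = 1)
         \<and> (finite {v. dot d k 1 v = 1}
            \<and> real (card {v. dot d k 1 v = 1}) = real (bin_digit_sum r) / real h
            \<and> (\<forall>v. dot d k 1 v \<noteq> 1 \<longrightarrow> dot d k 1 v = 0))
         \<and> (\<forall>v. bin_digit_sum (\<Sum>l=1..d. dot d k l v) = 0
                \<or> bin_digit_sum (\<Sum>l=1..d. dot d k l v) = h)))"
proof -
  have "real (g + 1) < real (2 ^ h)"
    using less_power_nat_floor_log [of "real g + 1"] assms(3) by simp
  then have "g + 1 < 2 ^ h"
    by (simp only: of_nat_less_iff)
  \<comment> \<open>The only use of \<open>g \<ge> 3\<close> (\<open>g \<ge> 1\<close> would do).\<close>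
  then have d: "Suc d < 2 ^ Suc h" and "2 \<le> h"
    using assms(1,2) power_less_imp_less_exp [of "2::nat" 2 h] by simp_all
  have le: "bin_digit_sum r \<le> h * s_vec d k"
    using assms(5) d by (rule in_K_bin_digit_sum_le_mult_s_vec)
  show ?thesis
  proof (intro conjI impI allI ballI)
    show "real_of_int \<lceil>real (bin_digit_sum r) / real h\<rceil> \<le> real (s_vec d k)"
      using \<open>2 \<le> h\<close> le by (intro ceiling_divide_le_of_le_mult) simp_all
    assume eq: "real (s_vec d k) = real (bin_digit_sum r) / real h"
    then have "bin_digit_sum r = h * s_vec d k"
      using \<open>2 \<le> h\<close> by (simp add: field_simps flip: of_nat_mult)
    note box = in_K_equality_case [OF assms(5) d \<open>2 \<le> h\<close> this]
    fix l v
    show "l \<in> {1..d} \<Longrightarrow> dot d k l v = 0 \<or> dot d k l v = 1"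
      using box(1) [of l v] by auto
    show "finite {v. dot d k 1 v = 1}"
      and "real (card {v. dot d k 1 v = 1}) = real (bin_digit_sum r) / real h"
      using box(2,3) eq by simp_all
    show "dot d k 1 v \<noteq> 1 \<Longrightarrow> dot d k 1 v = 0"
      using box(1) [of 1 v] by simp
    show "bin_digit_sum (\<Sum>l=1..d. dot d k l v) = 0 \<or> bin_digit_sum (\<Sum>l=1..d. dot d k l v) = h"
      by (rule box(4))
  qed
qed

end
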